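(* Let $n\ge 0$ be an integer, $\alpha=-\frac{1}{2n+2}$, and for $k\in\mathbb{Z}_+$ let $$v_k(t)=e^{-\frac{t^{2n+2}}{2n+2}}L^{(\alpha)}_{k}\!\left(\frac{t^{2n+2}}{n+1}\right),$$ with the convention $v_\ell\equiv0$ for $\ell<0$. Then $$t\frac{d}{dt}v_k(t)=(n+1)\big((k+1)v_{k+1}(t)-(1+\alpha)v_k(t)-(k+\alpha)v_{k-1}(t)\big),\quad k\ge1,$$ $$t\frac{d}{dt}v_0(t)=(n+1)\big(v_1(t)-(1+\alpha)v_0(t)\big).$$ More generally, for all $i,k\in\mathbb{Z}_+$ there are constants $\delta^{k,i}_j$, $j=-i,\dots,i$, with $$\Big(t\frac{d}{dt}\Big)^{i}v_k(t)=\sum_{j=-i}^{i}\delta^{k,i}_{j}\,v_{k+j}(t)=\sum_{j=\max\{k-i,0\}}^{k+i}\delta^{k,i}_{j-k}v_j(t),$$ where (i) $\delta^{k,i}_i=(n+1)^i\frac{(k+i)!}{k!}$, and (ii) $|\delta^{k,i}_j|\le C^{i}\frac{(k+i)!}{k!}$ for $j=-i,\dots,i$, with $C>0$ a suitable constant independent of $i,j,k$.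
   Context: $L^{(a)}_k(s)=\sum_{i=0}^{k}(-1)^i\binom{k+a}{k-i}\frac{s^i}{i!}$ denotes the generalized Laguerre polynomial of degree $k$ and parameter $a$. *)

theory Defs
  imports "HOL-Analysis.Analysis"
begin

definition laguerre :: "nat \<Rightarrow> real \<Rightarrow> real \<Rightarrow> real" where
  "laguerre k a s = (\<Sum>i=0..k. (-1)^i * ((real k + a) gchoose (k - i)) * s^i / fact i)"

definition lag_alpha :: "nat \<Rightarrow> real" where
  "lag_alpha n = - 1 / (2 * real n + 2)"

definition vfun :: "nat \<Rightarrow> int \<Rightarrow> real \<Rightarrow> real" where
  "vfun n k t = (if k < 0 then 0 else
      exp (- (t ^ (2*n+2)) / (2 * real n + 2)) *
      laguerre (nat k) (lag_alpha n) (t ^ (2*n+2) / (real n + 1)))"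

definition euler_op :: "(real \<Rightarrow> real) \<Rightarrow> real \<Rightarrow> real" where
  "euler_op f = (\<lambda>t. t * deriv f t)"

end

theory Submission
  imports Defs
begin

text \<open>
  With \<open>s = t^(2n+2)/(n+1)\<close> one has \<open>v\<^sub>k(t) = e^(-s/2) L\<^sub>k(s)\<close> and
  \<open>t d/dt = (2n+2) s d/ds\<close>, so the first-order recurrence is the classical identity
  \<open>2 s L\<^sub>k' - s L\<^sub>k = (k+1) L\<^sub>(k+1) - (1+\<alpha>) L\<^sub>k - (k+\<alpha>) L\<^sub>(k-1)\<close>, valid for every
  parameter \<alpha> and checked coefficientwise with the absorption identities of the generalized
  binomial coefficient. Iterating it, \<open>(t d/dt)\<^sup>i v\<^sub>k\<close> is a combination of
  \<open>v\<^sub>(k-i), ..., v\<^sub>(k+i)\<close> whose coefficients obey a three-term recursion. The top coefficient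
  gains the factor \<open>(n+1)(k+i+1)\<close> at each step, and since \<open>|\<alpha>| \<le> 1/2\<close> every coefficient grows
  by at most \<open>3(n+1)(k+i+1)\<close>, which gives \<open>C = 3(n+1)\<close>.
\<close>

lemma gbinomial_laguerre_step:
  fixes b x :: real
  shows "2 * x * (b gchoose d) + x * (b gchoose Suc d)
           = (x + real d + 1) * ((b + 1) gchoose Suc d) - (1 + b - x) * (b gchoose d)"
proof -
  have up: "real (Suc d) * ((b + 1) gchoose Suc d) = (b + 1) * (b gchoose d)"
    using gbinomial_absorption[of d "b + 1"] by simp
  have same: "real (Suc d) * (b gchoose Suc d) = (b - real d) * (b gchoose d)"
    using gbinomial_mult_1[of b d] by (simp add: algebra_simps)
  have "real (Suc d) * (2 * x * (b gchoose d) + x * (b gchoose Suc d))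
          = 2 * x * real (Suc d) * (b gchoose d) + x * (real (Suc d) * (b gchoose Suc d))"
    by (simp add: algebra_simps)
  also have "\<dots> = x * (b + real d + 2) * (b gchoose d)"
    unfolding same by (simp add: algebra_simps)
  also have "\<dots> = real (Suc d) * ((x + real d + 1) * ((b + 1) gchoose Suc d)
                                    - (1 + b - x) * (b gchoose d))"
    using up by (simp add: algebra_simps)
  finally show ?thesis by (simp only: mult_cancel_left of_nat_eq_0_iff) simp
qed

lemma sum_shift_index:
  fixes f g :: "int \<Rightarrow> real"
  assumes "finite B" and "(\<lambda>j. j + c) ` A \<subseteq> B" and "\<And>j. j \<notin> A \<Longrightarrow> f j = 0"
  shows "(\<Sum>j\<in>A. f j * g (j + c)) = (\<Sum>j\<in>B. f (j - c) * g j)"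
proof -
  have "(\<Sum>j\<in>A. f j * g (j + c)) = (\<Sum>j\<in>(\<lambda>j. j + c) ` A. f (j - c) * g j)"
    by (subst sum.reindex) (auto simp: inj_on_def)
  also have "\<dots> = (\<Sum>j\<in>B. f (j - c) * g j)"
  proof (rule sum.mono_neutral_left[OF assms(1,2)])
    have "j - c \<notin> A" if "j \<notin> (\<lambda>j. j + c) ` A" for j
      using that by force
    then show "\<forall>j\<in>B - (\<lambda>j. j + c) ` A. f (j - c) * g j = 0"
      using assms(3) by simp
  qed
  finally show ?thesis .
qed

lemma abs_mult_le_if_nonzero:
  fixes c x :: real
  assumes "\<bar>x\<bar> \<le> B" and "x \<noteq> 0 \<Longrightarrow> \<bar>c\<bar> \<le> M" and "0 \<le> M"
  shows "\<bar>c * x\<bar> \<le> M * B"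
  using assms by (cases "x = 0") (auto simp: abs_mult intro: mult_mono)

lemma has_real_derivative_comp_power:
  assumes "(g has_real_derivative g') (at (t^p / c))"
  shows "((\<lambda>t. g (t^p / c)) has_real_derivative g' * (real p * t^(p - Suc 0) / c)) (at t)"
  using assms by (intro DERIV_chain2[of g g' "\<lambda>t. t^p / c"] DERIV_cdivide DERIV_pow)

lemma euler_op_comp_power:
  assumes "(g has_real_derivative g') (at (t^p / c))"
  shows "euler_op (\<lambda>t. g (t^p / c)) t = real p * (t^p / c) * g'"
  unfolding euler_op_def DERIV_imp_deriv[OF has_real_derivative_comp_power[OF assms]]
  by (cases p) simp_all

lemma euler_op_sum:
  assumes "\<And>j. j \<in> I \<Longrightarrow> f j differentiable (at t)"
  shows "euler_op (\<lambda>t. \<Sum>j\<in>I. w j * f j t) t = (\<Sum>j\<in>I. w j * euler_op (f j) t)"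
proof -
  have "((\<lambda>t. \<Sum>j\<in>I. w j * f j t) has_real_derivative (\<Sum>j\<in>I. w j * deriv (f j) t)) (at t)"
    using assms by (intro DERIV_sum DERIV_cmult) (simp add: DERIV_deriv_iff_real_differentiable)
  then show ?thesis
    unfolding euler_op_def by (simp add: DERIV_imp_deriv sum_distrib_left mult_ac)
qed

definition laguerre_coeff :: "real \<Rightarrow> nat \<Rightarrow> nat \<Rightarrow> real" where
  "laguerre_coeff a k i =
     (if i \<le> k then (-1)^i * ((real k + a) gchoose (k - i)) / fact i else 0)"

lemma laguerre_eq_sum_coeff:
  assumes "k \<le> M"
  shows "laguerre k a s = (\<Sum>i\<le>M. laguerre_coeff a k i * s^i)"
proof -
  have "laguerre k a s = (\<Sum>i\<le>k. laguerre_coeff a k i * s^i)"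
    unfolding laguerre_def laguerre_coeff_def atLeast0AtMost by (intro sum.cong) auto
  also have "\<dots> = (\<Sum>i\<le>M. laguerre_coeff a k i * s^i)"
    using assms by (intro sum.mono_neutral_left) (auto simp: laguerre_coeff_def)
  finally show ?thesis .
qed

lemma has_real_derivative_laguerre:
  assumes "k \<le> M"
  shows "(laguerre k a has_real_derivative
           (\<Sum>i\<le>M. real i * laguerre_coeff a k i * s^(i - 1))) (at s)"
proof -
  have "laguerre k a = (\<lambda>s. \<Sum>i\<le>M. laguerre_coeff a k i * s^i)"
    using laguerre_eq_sum_coeff[OF assms] by blast
  then show ?thesis by (auto intro!: derivative_eq_intros sum.cong)
qed

lemma laguerre_coeff_recurrence:
  "2 * real i * laguerre_coeff a k i - (if 1 \<le> i then laguerre_coeff a k (i - 1) else 0)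
     = (real k + 1) * laguerre_coeff a (k + 1) i - (1 + a) * laguerre_coeff a k i
       - (if 1 \<le> k then (real k + a) * laguerre_coeff a (k - 1) i else 0)"
proof -
  consider (below) d where "k = i + d" | (top) "i = k + 1" | (above) "k + 1 < i"
    by (metis le_Suc_ex not_less_eq_eq linorder_neqE_nat Suc_eq_plus1 Suc_leI)
  then show ?thesis
  proof cases
    case below
    define b where "b = real k + a"
    define s :: real where "s = (-1)^i / fact i"
    have c0: "laguerre_coeff a k i = s * (b gchoose d)"
      unfolding laguerre_coeff_def s_def b_def below by simp
    have c1: "laguerre_coeff a (k + 1) i = s * ((b + 1) gchoose Suc d)"
      unfolding laguerre_coeff_def s_def b_def below by (simp add: Suc_diff_le algebra_simps)
    have c2: "(if 1 \<le> i then laguerre_coeff a k (i - 1) else 0) = - real i * s * (b gchoose Suc d)"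
    proof (cases i)
      case (Suc i')
      have "laguerre_coeff a k i' = (-1)^i' * (b gchoose Suc d) / fact i'"
        unfolding laguerre_coeff_def b_def below Suc by simp
      moreover have "fact i = real i * (fact i' :: real)"
        using Suc by simp
      ultimately show ?thesis
        unfolding s_def using Suc by (simp del: fact_Suc of_nat_Suc add: field_simps)
    qed simp
    have c3: "(if 1 \<le> k then (real k + a) * laguerre_coeff a (k - 1) i else 0)
                = real d * s * (b gchoose d)"
    proof (cases d)
      case (Suc d')
      have "real d * (b gchoose d) = b * ((b - 1) gchoose d')"
        using gbinomial_absorption[of d' b] Suc by simp
      moreover have "b - 1 = real (k - 1) + a"
        using below Suc by (simp add: b_def)
      ultimately show ?thesis
        unfolding laguerre_coeff_def s_def using below Suc by (simp add: b_def add.assoc)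
    qed (use below in \<open>auto simp: laguerre_coeff_def\<close>)
    have "2 * real i * (b gchoose d) + real i * (b gchoose Suc d)
            = (real k + 1) * ((b + 1) gchoose Suc d) - (1 + a) * (b gchoose d) - real d * (b gchoose d)"
      using gbinomial_laguerre_step[of "real i" b d] below by (simp add: b_def algebra_simps)
    from arg_cong[where f="(*) s", OF this] show ?thesis
      unfolding c0 c1 c2 c3 by (simp add: algebra_simps)
  next
    case top
    have "(real k + 1) * ((-1)^(k + 1) / fact (k + 1)) = - ((-1::real)^k / fact k)"
      by (simp del: of_nat_Suc add: divide_simps)
    then show ?thesis
      using top by (auto simp: laguerre_coeff_def)
  next
    case above
    then show ?thesis by (auto simp: laguerre_coeff_def)
  qed
qed

lemma laguerre_differential_recurrence:
  "2 * s * deriv (laguerre k a) s - s * laguerre k a s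
     = (real k + 1) * laguerre (k + 1) a s - (1 + a) * laguerre k a s
       - (if 1 \<le> k then (real k + a) * laguerre (k - 1) a s else 0)"
proof -
  let ?c = "laguerre_coeff a"
  define shifted where "shifted i = (if 1 \<le> i then ?c k (i - 1) else 0)" for i
  have deriv_part: "2 * s * deriv (laguerre k a) s = (\<Sum>i\<le>k + 2. 2 * real i * ?c k i * s^i)"
  proof -
    have d: "deriv (laguerre k a) s = (\<Sum>i\<le>k + 2. real i * ?c k i * s^(i - 1))"
      by (rule DERIV_imp_deriv[OF has_real_derivative_laguerre]) simp
    show ?thesis
      unfolding d sum_distrib_left
    proof (intro sum.cong refl)
      show "2 * s * (real i * ?c k i * s^(i - 1)) = 2 * real i * ?c k i * s^i" for i
        by (cases i) simp_all
    qed
  qed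
  have "(\<Sum>i\<le>k + 2. shifted i * s^i) = shifted 0 * s^0 + (\<Sum>i\<le>Suc k. shifted (Suc i) * s^Suc i)"
    unfolding add_2_eq_Suc' by (rule sum.atMost_Suc_shift)
  also have "\<dots> = s * laguerre k a s"
    by (simp add: shifted_def laguerre_eq_sum_coeff[of k "Suc k"] sum_distrib_left mult_ac
             del: sum.atMost_Suc)
  finally have shift_part: "s * laguerre k a s = (\<Sum>i\<le>k + 2. shifted i * s^i)" ..
  have lower: "(if 1 \<le> k then (real k + a) * laguerre (k - 1) a s else 0)
      = (\<Sum>i\<le>k + 2. (if 1 \<le> k then (real k + a) * ?c (k - 1) i else 0) * s^i)"
    by (simp add: laguerre_eq_sum_coeff[of _ "k + 2"] sum_distrib_left mult.assoc del: sum.atMost_Suc)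
  have "(real k + 1) * laguerre (k + 1) a s - (1 + a) * laguerre k a s
          - (if 1 \<le> k then (real k + a) * laguerre (k - 1) a s else 0)
        = (\<Sum>i\<le>k + 2. ((real k + 1) * ?c (k + 1) i - (1 + a) * ?c k i
             - (if 1 \<le> k then (real k + a) * ?c (k - 1) i else 0)) * s^i)"
    unfolding lower
    by (simp add: laguerre_eq_sum_coeff[of _ "k + 2"] sum_distrib_left sum_subtractf
                  left_diff_distrib mult.assoc del: sum.atMost_Suc)
  also have "\<dots> = (\<Sum>i\<le>k + 2. (2 * real i * ?c k i - shifted i) * s^i)"
    unfolding shifted_def laguerre_coeff_recurrence ..
  finally show ?thesis
    unfolding deriv_part shift_part by (simp add: sum_subtractf algebra_simps)
qed

definition laguerre_fun :: "nat \<Rightarrow> real \<Rightarrow> real \<Rightarrow> real" where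
  "laguerre_fun k a s = exp (- s / 2) * laguerre k a s"

lemma has_real_derivative_laguerre_fun:
  "(laguerre_fun k a has_real_derivative
      exp (- s / 2) * (deriv (laguerre k a) s - laguerre k a s / 2)) (at s)"
proof -
  have "(laguerre k a has_real_derivative deriv (laguerre k a) s) (at s)"
    using has_real_derivative_laguerre[OF order_refl] by (metis DERIV_imp_deriv)
  moreover have "laguerre_fun k a = (\<lambda>s. exp (- s / 2) * laguerre k a s)"
    by (simp add: fun_eq_iff laguerre_fun_def)
  ultimately show ?thesis
    by (auto intro!: derivative_eq_intros simp: algebra_simps)
qed

lemma laguerre_fun_recurrence:
  "2 * s * deriv (laguerre_fun k a) s
     = (real k + 1) * laguerre_fun (k + 1) a s - (1 + a) * laguerre_fun k a s
       - (if 1 \<le> k then (real k + a) * laguerre_fun (k - 1) a s else 0)"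
proof -
  have "2 * s * deriv (laguerre_fun k a) s
          = exp (- s / 2) * (2 * s * deriv (laguerre k a) s - s * laguerre k a s)"
    unfolding DERIV_imp_deriv[OF has_real_derivative_laguerre_fun] by (simp add: algebra_simps)
  also have "\<dots> = exp (- s / 2) * ((real k + 1) * laguerre (k + 1) a s - (1 + a) * laguerre k a s
                      - (if 1 \<le> k then (real k + a) * laguerre (k - 1) a s else 0))"
    by (simp only: laguerre_differential_recurrence)
  finally show ?thesis
    by (cases "1 \<le> k") (simp_all add: laguerre_fun_def algebra_simps)
qed

lemma vfun_eq_laguerre_fun:
  "vfun n (int k) = (\<lambda>t. laguerre_fun k (lag_alpha n) (t^(2*n+2) / (real n + 1)))"
proof
  fix t :: real
  have "- (t^(2*n+2)) / (2 * real n + 2) = - (t^(2*n+2) / (real n + 1)) / 2"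
    by (simp add: field_simps)
  then show "vfun n (int k) t = laguerre_fun k (lag_alpha n) (t^(2*n+2) / (real n + 1))"
    by (simp add: vfun_def laguerre_fun_def)
qed

lemma vfun_differentiable: "vfun n m differentiable (at t)"
proof (cases "m < 0")
  case True
  then have "vfun n m = (\<lambda>_. 0)"
    by (simp add: vfun_def fun_eq_iff)
  then show ?thesis by simp
next
  case False
  then obtain k where "m = int k"
    by (metis nonneg_int_cases not_less)
  moreover have "(\<lambda>t. laguerre_fun k (lag_alpha n) (t^(2*n+2) / (real n + 1))) differentiable (at t)"
    unfolding real_differentiable_def
    using has_real_derivative_comp_power[OF has_real_derivative_laguerre_fun,
            where p = "2*n+2" and c = "real n + 1"] by blast
  ultimately show ?thesis
    by (simp add: vfun_eq_laguerre_fun)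
qed

lemma euler_op_vfun:
  "euler_op (vfun n m) t
     = (real n + 1) * ((real_of_int m + 1) * vfun n (m + 1) t - (1 + lag_alpha n) * vfun n m t
                       - (real_of_int m + lag_alpha n) * vfun n (m - 1) t)"
proof (cases "m < 0")
  case True
  then have "vfun n m = (\<lambda>_. 0)"
    by (simp add: vfun_def fun_eq_iff)
  moreover have "(real_of_int m + 1) * vfun n (m + 1) t = 0"
    using True by (cases "m = -1") (auto simp: vfun_def)
  ultimately show ?thesis
    using True by (simp add: euler_op_def vfun_def)
next
  case False
  then obtain k where m: "m = int k"
    by (metis nonneg_int_cases not_less)
  define a where "a = lag_alpha n"
  define s where "s = t^(2*n+2) / (real n + 1)"
  have v: "vfun n (int j) t = laguerre_fun j a s" for j
    unfolding vfun_eq_laguerre_fun a_def s_def ..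
  have v_succ: "vfun n (int k + 1) t = laguerre_fun (k + 1) a s"
    using v[of "k + 1"] by (simp add: add.commute)
  have v_pred: "vfun n (int k - 1) t = (if 1 \<le> k then laguerre_fun (k - 1) a s else 0)"
    using v[of "k - 1"] by (cases k) (auto simp: vfun_def)
  have "(laguerre_fun k a has_real_derivative deriv (laguerre_fun k a) s) (at s)"
    using has_real_derivative_laguerre_fun by (metis DERIV_imp_deriv)
  then have "euler_op (vfun n m) t = real (2*n+2) * s * deriv (laguerre_fun k a) s"
    unfolding m vfun_eq_laguerre_fun a_def s_def by (rule euler_op_comp_power)
  also have "\<dots> = (real n + 1) * (2 * s * deriv (laguerre_fun k a) s)"
    by simp
  also have "\<dots> = (real n + 1) * ((real k + 1) * laguerre_fun (k + 1) a s - (1 + a) * laguerre_fun k a s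
                       - (if 1 \<le> k then (real k + a) * laguerre_fun (k - 1) a s else 0))"
    by (simp only: laguerre_fun_recurrence)
  finally show ?thesis
    unfolding v_succ v_pred m v a_def by simp
qed

text \<open>
  The paper's coefficients \<open>\<delta>_j^{k,i}\<close>: the recursion comes from applying \<open>euler_op_vfun\<close>
  to each \<open>v_{k+j}\<close> and collecting the coefficient of \<open>v_{k+j}\<close>.
\<close>

fun euler_power_coeff :: "nat \<Rightarrow> nat \<Rightarrow> nat \<Rightarrow> int \<Rightarrow> real" where
  "euler_power_coeff n k 0 j = (if j = 0 then 1 else 0)"
| "euler_power_coeff n k (Suc i) j =
     (real n + 1) * (real_of_int (int k + j) * euler_power_coeff n k i (j - 1)
       - (1 + lag_alpha n) * euler_power_coeff n k i j
       - (real_of_int (int k + j + 1) + lag_alpha n) * euler_power_coeff n k i (j + 1))"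

lemma euler_power_coeff_eq_0: "j \<notin> {- int i..int i} \<Longrightarrow> euler_power_coeff n k i j = 0"
  by (induction i arbitrary: j) auto

lemma euler_power_coeff_top: "euler_power_coeff n k i (int i) = (real n + 1)^i * fact (k + i) / fact k"
proof (induction i)
  case (Suc i)
  have "euler_power_coeff n k i (int (Suc i)) = 0" "euler_power_coeff n k i (int (Suc i) + 1) = 0"
    by (auto intro: euler_power_coeff_eq_0)
  then show ?case
    using Suc.IH by (simp add: algebra_simps)
qed simp

lemma abs_lag_alpha_le: "\<bar>lag_alpha n\<bar> \<le> 1 / 2" "\<bar>1 + lag_alpha n\<bar> \<le> 1"
  unfolding lag_alpha_def by (auto simp: field_simps abs_if)

lemma abs_euler_power_coeff_le:
  "\<bar>euler_power_coeff n k i j\<bar> \<le> (3 * (real n + 1))^i * fact (k + i) / fact k"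
proof (induction i arbitrary: j)
  case (Suc i)
  define B where "B = (3 * (real n + 1))^i * fact (k + i) / fact k"
  let ?\<delta> = "euler_power_coeff n k i" and ?K = "real (k + i + 1)"
  have nonzero_index: "j' \<in> {- int i..int i}" if "?\<delta> j' \<noteq> 0" for j'
    using euler_power_coeff_eq_0 that by blast
  have "\<bar>real_of_int (int k + j) * ?\<delta> (j - 1)\<bar> \<le> ?K * B"
    using Suc.IH nonzero_index[of "j - 1"] unfolding B_def
    by (intro abs_mult_le_if_nonzero) auto
  moreover have "\<bar>(1 + lag_alpha n) * ?\<delta> j\<bar> \<le> ?K * B"
    using Suc.IH abs_lag_alpha_le(2)[of n] unfolding B_def
    by (intro abs_mult_le_if_nonzero) auto
  moreover have "\<bar>(real_of_int (int k + j + 1) + lag_alpha n) * ?\<delta> (j + 1)\<bar> \<le> ?K * B"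
    using Suc.IH nonzero_index[of "j + 1"] abs_lag_alpha_le(1)[of n] unfolding B_def
    by (intro abs_mult_le_if_nonzero) (auto simp: abs_le_iff)
  ultimately have "\<bar>real_of_int (int k + j) * ?\<delta> (j - 1) - (1 + lag_alpha n) * ?\<delta> j
                      - (real_of_int (int k + j + 1) + lag_alpha n) * ?\<delta> (j + 1)\<bar> \<le> 3 * (?K * B)"
    by (simp only: abs_le_iff) linarith
  then have "\<bar>euler_power_coeff n k (Suc i) j\<bar> \<le> (real n + 1) * (3 * (?K * B))"
    by (simp add: abs_mult mult_left_mono del: of_int_add of_nat_add)
  also have "\<dots> = (3 * (real n + 1))^(Suc i) * fact (k + Suc i) / fact k"
    by (simp add: B_def algebra_simps)
  finally show ?case .
qed simp

lemma euler_op_power_vfun: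
  "(euler_op ^^ i) (vfun n (int k))
     = (\<lambda>t. \<Sum>j\<in>{- int i..int i}. euler_power_coeff n k i j * vfun n (int k + j) t)"
proof (induction i)
  case (Suc i)
  show ?case
  proof
    fix t
    let ?\<delta> = "euler_power_coeff n k i"
    define N where "N = real n + 1"
    define a where "a = lag_alpha n"
    define g where "g j = vfun n (int k + j) t" for j
    define I where "I = {- int i..int i}"
    define J where "J = {- int (Suc i)..int (Suc i)}"
    have shift: "(\<Sum>j\<in>I. f j * g (j + c)) = (\<Sum>j\<in>J. f (j - c) * g j)"
      if "\<bar>c\<bar> \<le> 1" and "\<And>j. j \<notin> I \<Longrightarrow> f j = 0" for f c
      using that by (intro sum_shift_index) (auto simp: I_def J_def)
    have "(euler_op ^^ Suc i) (vfun n (int k)) t = (\<Sum>j\<in>I. ?\<delta> j * euler_op (vfun n (int k + j)) t)"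
      using Suc.IH by (simp add: I_def euler_op_sum vfun_differentiable)
    also have "\<dots> = N * (\<Sum>j\<in>I. (?\<delta> j * (real_of_int (int k + j) + 1)) * g (j + 1))
        - N * (1 + a) * (\<Sum>j\<in>I. ?\<delta> j * g (j + 0))
        - N * (\<Sum>j\<in>I. (?\<delta> j * (real_of_int (int k + j) + a)) * g (j + -1))"
      unfolding euler_op_vfun sum_distrib_left sum_subtractf[symmetric] N_def a_def g_def
      by (intro sum.cong) (simp_all add: algebra_simps)
    also have "\<dots> = N * (\<Sum>j\<in>J. (?\<delta> (j - 1) * (real_of_int (int k + (j - 1)) + 1)) * g j)
        - N * (1 + a) * (\<Sum>j\<in>J. ?\<delta> (j - 0) * g j)
        - N * (\<Sum>j\<in>J. (?\<delta> (j - -1) * (real_of_int (int k + (j - -1)) + a)) * g j)"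
      by (subst (1 2 3) shift) (auto simp: I_def euler_power_coeff_eq_0)
    also have "\<dots> = (\<Sum>j\<in>J. euler_power_coeff n k (Suc i) j * g j)"
      unfolding N_def a_def
      by (simp add: sum_subtractf sum_distrib_left sum.distrib[symmetric] algebra_simps)
    finally show "(euler_op ^^ Suc i) (vfun n (int k)) t
        = (\<Sum>j\<in>{- int (Suc i)..int (Suc i)}. euler_power_coeff n k (Suc i) j * vfun n (int k + j) t)"
      unfolding J_def g_def .
  qed
qed (simp add: fun_eq_iff)

lemma sum_vfun_absolute_index:
  "(\<Sum>j\<in>{- int i..int i}. euler_power_coeff n k i j * vfun n (int k + j) t)
     = (\<Sum>j\<in>{max (int k - int i) 0..int k + int i}. euler_power_coeff n k i (j - int k) * vfun n j t)"
proof -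
  have "(\<Sum>j\<in>{- int i..int i}. euler_power_coeff n k i j * vfun n (int k + j) t)
      = (\<Sum>j\<in>{int k - int i..int k + int i}. euler_power_coeff n k i (j - int k) * vfun n j t)"
    unfolding add.commute[of "int k"]
    by (rule sum_shift_index[where g = "\<lambda>j. vfun n j t"]) (auto simp: euler_power_coeff_eq_0)
  also have "\<dots> = (\<Sum>j\<in>{max (int k - int i) 0..int k + int i}. euler_power_coeff n k i (j - int k) * vfun n j t)"
    by (intro sum.mono_neutral_right) (auto simp: vfun_def)
  finally show ?thesis .
qed

theorem lemma5p1:
  fixes n :: nat
  defines "\<alpha> \<equiv> lag_alpha n"
  shows
    "(\<forall>k::nat. k \<ge> 1 \<longrightarrow> (\<forall>t::real.
        euler_op (vfun n (int k)) t =
          (real n + 1) * ((real k + 1) * vfun n (int k + 1) t - (1 + \<alpha>) * vfun n (int k) t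
                          - (real k + \<alpha>) * vfun n (int k - 1) t)))
   \<and> (\<forall>t::real. euler_op (vfun n 0) t = (real n + 1) * (vfun n 1 t - (1 + \<alpha>) * vfun n 0 t))
   \<and> (\<exists>C::real. C > 0 \<and>
        (\<forall>i k :: nat. \<exists>\<delta> :: int \<Rightarrow> real.
           (\<forall>t::real. (euler_op ^^ i) (vfun n (int k)) t
                = (\<Sum>j\<in>{- int i..int i}. \<delta> j * vfun n (int k + j) t)
             \<and> (euler_op ^^ i) (vfun n (int k)) t
                = (\<Sum>j\<in>{max (int k - int i) 0..int k + int i}. \<delta> (j - int k) * vfun n j t))
         \<and> \<delta> (int i) = (real n + 1) ^ i * fact (k + i) / fact k
         \<and> (\<forall>j\<in>{- int i..int i}. \<bar>\<delta> j\<bar> \<le> C ^ i * fact (k + i) / fact k)))"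
  unfolding \<alpha>_def
  apply (intro conjI allI impI exI[of _ "3 * (real n + 1)"])
  subgoal for k t
    using euler_op_vfun[of n "int k" t] by simp
  subgoal for t
    using euler_op_vfun[of n 0 t] by (simp add: vfun_def)
  subgoal by simp
  subgoal for i k
    by (intro exI[of _ "euler_power_coeff n k i"] conjI allI ballI
              euler_power_coeff_top abs_euler_power_coeff_le)
       (simp_all add: euler_op_power_vfun sum_vfun_absolute_index)
  done

end
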